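(* Consider the controlled mechanical system on $G$ $$\dot g=T_eR_g(\xi),\qquad \dot\xi+\sharp\big[\mathrm{ad}^*_\xi\flat(\xi)\big]=\sum_{a=1}^m u^af_a,$$ where $f_1,\dots,f_m\in\mathfrak{g}$ are linearly independent, $\mathfrak{f}=\mathrm{span}\{f_1,\dots,f_m\}$, $m<n=\dim\mathfrak{g}$. Let $\mathfrak{d}\subseteq\mathfrak{g}$ be a subspace with $\mathfrak{g}=\mathfrak{f}\oplus\mathfrak{d}$. For $\xi\in\mathfrak{g}$ write uniquely $\sharp[\mathrm{ad}^*_\xi\flat(\xi)]=\eta(\xi)+\sum_b\tau^b(\xi)f_b$ with $\eta(\xi)\in\mathfrak{d}$, and define the feedback $u^*(\xi)=(\tau^1(\xi),\dots,\tau^m(\xi))$. Then $u^*$ makes $\mathfrak{d}$ a virtual nonholonomic constraint: every solution of the closed-loop system with $u=u^*(\xi)$ and $\xi(0)\in\mathfrak{d}$ satisfies $\xi(t)\in\mathfrak{d}$ for all $t\ge0$. Moreover, this control law is unique: if $\xi(t)$ is a solution of the system for some control $u(t)$ with $\xi(t)\in\mathfrak{d}$ for all $t$, then $u(t)=u^*(\xi(t))$ for all $t$.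
   Context: $G$ is a Lie group of dimension $n$ with Lie algebra $\mathfrak{g}=T_eG$, $R_g(h)=hg$, and $\langle\cdot,\cdot\rangle$ is an inner product on $\mathfrak{g}$ (inducing a right-invariant metric on $G$). $\flat:\mathfrak{g}\to\mathfrak{g}^*$, $\flat(\xi)(\eta)=\langle\xi,\eta\rangle$, $\sharp=\flat^{-1}$; $\mathrm{ad}^*_\xi$ is the dual of $\mathrm{ad}_\xi=[\xi,\cdot]$. A virtual nonholonomic constraint for the system is a subspace $\mathfrak{d}\subseteq\mathfrak{g}$ that is controlled invariant: there is a control law such that solutions of the closed-loop system with $\xi(0)\in\mathfrak{d}$ satisfy $\xi(t)\in\mathfrak{d}$ for all $t\ge0$. *)

theory Defs
  imports "HOL-Analysis.Analysis"
begin

text \<open>A Lie bracket on the finite-dimensional inner product space 'a (playing the role of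
the Lie algebra g, with the type's inner product being the given inner product).\<close>
definition lie_bracket :: "('a::real_vector \<Rightarrow> 'a \<Rightarrow> 'a) \<Rightarrow> bool" where
  "lie_bracket br \<longleftrightarrow> bilinear br \<and> (\<forall>x y. br x y = - br y x)
     \<and> (\<forall>x y z. br x (br y z) + br y (br z x) + br z (br x y) = 0)"

text \<open>sharp[ad^*_xi flat(xi)]: the unique vector w with <w, eta> = <xi, [xi, eta]> for all eta.\<close>
definition ep_term :: "('a::real_inner \<Rightarrow> 'a \<Rightarrow> 'a) \<Rightarrow> 'a \<Rightarrow> 'a" where
  "ep_term br \<xi> = (THE w. \<forall>\<eta>. inner w \<eta> = inner \<xi> (br \<xi> \<eta>))"

text \<open>The feedback u^*(xi) = (tau^1(xi),...,tau^m(xi)), indexed by 0..<m (zero outside),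
where ep_term br xi = eta(xi) + sum_b tau^b(xi) f_b with eta(xi) in d.\<close>
definition ustar :: "('a::real_inner \<Rightarrow> 'a \<Rightarrow> 'a) \<Rightarrow> (nat \<Rightarrow> 'a) \<Rightarrow> nat \<Rightarrow> 'a set \<Rightarrow> 'a \<Rightarrow> nat \<Rightarrow> real" where
  "ustar br f m d \<xi> = (THE \<tau>. (\<forall>b\<ge>m. \<tau> b = 0) \<and>
      (\<exists>\<eta>\<in>d. ep_term br \<xi> = \<eta> + (\<Sum>b<m. \<tau> b *\<^sub>R f b)))"

end

theory Submission imports Defs begin

text \<open>Since \<open>g = f \<oplus> d\<close>, the feedback \<open>u\<^sup>*\<close> is the unique control that cancels the
\<open>f\<close>-component of \<open>\<sharp>[ad\<^sup>*\<^sub>\<xi> \<flat>(\<xi>)]\<close>, so the closed-loop velocity is \<open>-\<eta>(\<xi>) \<in> d\<close>.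
A curve whose velocity stays in a subspace \<open>d\<close> has every linear functional vanishing on \<open>d\<close>
constant along it, hence it never leaves \<open>d\<close> once it starts there. Conversely, a curve
through a non-degenerate interval that lies in \<open>d\<close> has velocity in \<open>d\<close>, and then the
equation of motion is itself a decomposition of \<open>\<sharp>[ad\<^sup>*\<^sub>\<xi> \<flat>(\<xi>)]\<close> along \<open>d \<oplus> f\<close>, whose
uniqueness forces \<open>u = u\<^sup>*(\<xi>)\<close>.\<close>

lemma independent_sum_scaleR_eq_0_imp_coeff_eq_0:
  fixes f :: "nat \<Rightarrow> 'a::real_vector"
  assumes "independent (f ` {..<m})" "inj_on f {..<m}"
    and "(\<Sum>b<m. c b *\<^sub>R f b) = 0" "a < m"
  shows "c a = 0"
proof -
  let ?c = "\<lambda>v. c (inv_into {..<m} f v)"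
  have "(\<Sum>v\<in>f ` {..<m}. ?c v *\<^sub>R v) = (\<Sum>b<m. c b *\<^sub>R f b)"
    using assms(2) by (simp add: sum.reindex)
  with assms(3) have "(\<Sum>v\<in>f ` {..<m}. ?c v *\<^sub>R v) = 0" by simp
  then have "?c (f a) = 0"
    using independentD[OF assms(1) _ subset_refl, where u = ?c and v = "f a"] assms(4) by simp
  then show ?thesis using assms(2,4) by simp
qed

lemma ustar_eqI:
  fixes f :: "nat \<Rightarrow> 'a::real_inner"
  assumes indep: "independent (f ` {..<m})" and inj: "inj_on f {..<m}"
    and d: "subspace d" and direct: "span (f ` {..<m}) \<inter> d = {0}"
    and \<tau>: "\<forall>b\<ge>m. \<tau> b = 0" and \<eta>: "\<eta> \<in> d"
    and split: "ep_term br \<xi> = \<eta> + (\<Sum>b<m. \<tau> b *\<^sub>R f b)"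
  shows "ustar br f m d \<xi> = \<tau>"
  unfolding ustar_def
proof (rule the_equality)
  show "(\<forall>b\<ge>m. \<tau> b = 0) \<and> (\<exists>\<eta>\<in>d. ep_term br \<xi> = \<eta> + (\<Sum>b<m. \<tau> b *\<^sub>R f b))"
    using \<tau> \<eta> split by blast
next
  fix \<tau>' assume \<tau>': "(\<forall>b\<ge>m. \<tau>' b = 0) \<and> (\<exists>\<eta>\<in>d. ep_term br \<xi> = \<eta> + (\<Sum>b<m. \<tau>' b *\<^sub>R f b))"
  then obtain \<eta>' where \<eta>': "\<eta>' \<in> d" "ep_term br \<xi> = \<eta>' + (\<Sum>b<m. \<tau>' b *\<^sub>R f b)" by blast
  have diff: "\<eta> - \<eta>' = (\<Sum>b<m. (\<tau>' b - \<tau> b) *\<^sub>R f b)"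
    using \<eta>'(2) split by (simp add: scaleR_diff_left sum_subtractf algebra_simps)
  have "\<eta> - \<eta>' \<in> d" using d \<eta> \<eta>'(1) by (simp add: subspace_diff)
  moreover have "\<eta> - \<eta>' \<in> span (f ` {..<m})"
    unfolding diff by (intro span_sum span_mul span_base) auto
  ultimately have "\<eta> - \<eta>' = 0" using direct by blast
  then have "(\<Sum>b<m. (\<tau>' b - \<tau> b) *\<^sub>R f b) = 0" using diff by simp
  then have below_m: "\<tau>' b = \<tau> b" if "b < m" for b
    using independent_sum_scaleR_eq_0_imp_coeff_eq_0[OF indep inj, of "\<lambda>b. \<tau>' b - \<tau> b"] that
    by simp
  show "\<tau>' = \<tau>"
  proof
    fix b show "\<tau>' b = \<tau> b"
      using below_m \<tau> \<tau>' by (cases "b < m") auto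
  qed
qed

lemma ep_term_minus_ustar_in_subspace:
  fixes f :: "nat \<Rightarrow> 'a::real_inner"
  assumes indep: "independent (f ` {..<m})" and inj: "inj_on f {..<m}"
    and d: "subspace d" and direct: "span (f ` {..<m}) \<inter> d = {0}"
    and spanning: "\<forall>x. \<exists>y z. y \<in> span (f ` {..<m}) \<and> z \<in> d \<and> x = y + z"
  shows "ep_term br \<xi> - (\<Sum>b<m. ustar br f m d \<xi> b *\<^sub>R f b) \<in> d"
proof -
  obtain y z where y: "y \<in> span (f ` {..<m})" and z: "z \<in> d" and yz: "ep_term br \<xi> = y + z"
    using spanning by blast
  from y obtain c where c: "y = (\<Sum>b<m. c b *\<^sub>R f b)"
    by (auto simp: span_finite sum.reindex[OF inj])
  define \<tau> where "\<tau> = (\<lambda>b. if b < m then c b else 0)"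
  have y_\<tau>: "(\<Sum>b<m. \<tau> b *\<^sub>R f b) = y" unfolding c \<tau>_def by (intro sum.cong) auto
  then have "ustar br f m d \<xi> = \<tau>"
    by (intro ustar_eqI[OF indep inj d direct _ z]) (auto simp: \<tau>_def yz)
  then show ?thesis using z yz y_\<tau> by simp
qed

lemma mem_subspace_if_annihilators_vanish:
  fixes d :: "'a::euclidean_space set"
  assumes d: "subspace d" and annihilated: "\<And>v. (\<forall>x\<in>d. inner v x = 0) \<Longrightarrow> inner v y = 0"
  shows "y \<in> d"
proof -
  obtain p q where p: "p \<in> span d" and q: "\<And>w. w \<in> span d \<Longrightarrow> orthogonal q w"
    and y: "y = p + q"
    by (rule orthogonal_subspace_decomp_exists[of d y]) blast
  have "\<forall>x\<in>d. inner q x = 0" using q span_base by (auto simp: orthogonal_def)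
  then have "inner q y = 0" by (rule annihilated)
  moreover have "inner q p = 0" using p q by (simp add: orthogonal_def)
  ultimately have "q = 0" using y by (simp add: inner_add_right)
  then show ?thesis using p y d by (metis add.right_neutral span_eq_iff)
qed

lemma has_vector_derivative_in_subspace_imp_diff_in_subspace:
  fixes \<xi> :: "real \<Rightarrow> 'a::euclidean_space"
  assumes I: "is_interval I" and d: "subspace d"
    and deriv: "\<And>t. t \<in> I \<Longrightarrow> (\<xi> has_vector_derivative \<xi>' t) (at t within I)"
    and tangent: "\<And>t. t \<in> I \<Longrightarrow> \<xi>' t \<in> d"
    and "s \<in> I" "t \<in> I"
  shows "\<xi> t - \<xi> s \<in> d"
proof (rule mem_subspace_if_annihilators_vanish[OF d])
  fix v assume v: "\<forall>x\<in>d. inner v x = 0"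
  have "((\<lambda>r. inner v (\<xi> r)) has_vector_derivative 0) (at r within I)" if "r \<in> I" for r
    using bounded_linear.has_vector_derivative[OF bounded_linear_inner_right[of v] deriv[OF that]]
      v tangent[OF that] by simp
  then obtain k where "\<And>r. r \<in> I \<Longrightarrow> inner v (\<xi> r) = k"
    using has_vector_derivative_zero_constant[OF is_interval_convex[OF I]] by metis
  with \<open>s \<in> I\<close> \<open>t \<in> I\<close> show "inner v (\<xi> t - \<xi> s) = 0" by (simp add: inner_diff_right)
qed

lemma has_vector_derivative_in_subspace_if_curve_in_subspace:
  fixes \<xi> :: "real \<Rightarrow> 'a::euclidean_space"
  assumes I: "is_interval I" "s \<in> I" "t \<in> I" "s \<noteq> t" and d: "subspace d"
    and deriv: "(\<xi> has_vector_derivative \<xi>') (at t within I)"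
    and curve: "\<forall>r\<in>I. \<xi> r \<in> d"
  shows "\<xi>' \<in> d"
proof (rule mem_subspace_if_annihilators_vanish[OF d])
  fix v assume v: "\<forall>x\<in>d. inner v x = 0"
  have "t islimpt I"
    using I by (intro connected_imp_perfect) (auto simp: is_interval_connected)
  then have nontrivial: "at t within I \<noteq> bot" by (simp add: trivial_limit_within)
  have "((\<lambda>r. inner v (\<xi> r)) has_vector_derivative 0) (at t within I)"
    by (rule has_vector_derivative_transform[OF \<open>t \<in> I\<close>, where f="\<lambda>_. 0"])
       (use v curve in auto)
  moreover have "((\<lambda>r. inner v (\<xi> r)) has_vector_derivative inner v \<xi>') (at t within I)"
    by (rule bounded_linear.has_vector_derivative[OF bounded_linear_inner_right[of v] deriv])
  ultimately show "inner v \<xi>' = 0" using vector_derivative_unique_within[OF nontrivial] by metis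
qed

theorem theorem5:
  fixes br :: "'a::euclidean_space \<Rightarrow> 'a \<Rightarrow> 'a"
    and f :: "nat \<Rightarrow> 'a" and m :: nat and d :: "'a set"
  assumes lie: "lie_bracket br"
    and f_indep: "independent (f ` {..<m})" and f_inj: "inj_on f {..<m}"
    and m_lt: "m < DIM('a)"
    and d_sub: "subspace d"
    and direct1: "span (f ` {..<m}) \<inter> d = {0}"
    and direct2: "\<forall>x. \<exists>y z. y \<in> span (f ` {..<m}) \<and> z \<in> d \<and> x = y + z"
  shows
    "(\<forall>(I::real set) \<xi> \<xi>'. is_interval I \<and> 0 \<in> I \<and>
        (\<forall>t\<in>I. (\<xi> has_vector_derivative \<xi>' t) (at t within I) \<and>
                 \<xi>' t + ep_term br (\<xi> t) = (\<Sum>a<m. ustar br f m d (\<xi> t) a *\<^sub>R f a)) \<and>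
        \<xi> 0 \<in> d
        \<longrightarrow> (\<forall>t\<in>I. t \<ge> 0 \<longrightarrow> \<xi> t \<in> d))
   \<and> (\<forall>(I::real set) \<xi> \<xi>' (u :: real \<Rightarrow> nat \<Rightarrow> real). is_interval I \<and> (\<exists>s\<in>I. \<exists>t\<in>I. s \<noteq> t) \<and>
        (\<forall>t\<in>I. (\<xi> has_vector_derivative \<xi>' t) (at t within I) \<and>
                 \<xi>' t + ep_term br (\<xi> t) = (\<Sum>a<m. u t a *\<^sub>R f a)) \<and>
        (\<forall>t\<in>I. \<xi> t \<in> d)
        \<longrightarrow> (\<forall>t\<in>I. \<forall>a<m. u t a = ustar br f m d (\<xi> t) a))"
proof (intro conjI allI impI ballI)
  fix I :: "real set" and \<xi> \<xi>' t
  assume "is_interval I \<and> 0 \<in> I \<and>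
        (\<forall>t\<in>I. (\<xi> has_vector_derivative \<xi>' t) (at t within I) \<and>
                 \<xi>' t + ep_term br (\<xi> t) = (\<Sum>a<m. ustar br f m d (\<xi> t) a *\<^sub>R f a)) \<and>
        \<xi> 0 \<in> d" and "t \<in> I"
  then have I: "is_interval I" "0 \<in> I" "t \<in> I" and \<xi>0: "\<xi> 0 \<in> d"
    and motion: "\<And>r. r \<in> I \<Longrightarrow> (\<xi> has_vector_derivative \<xi>' r) (at r within I) \<and>
                 \<xi>' r = - (ep_term br (\<xi> r) - (\<Sum>a<m. ustar br f m d (\<xi> r) a *\<^sub>R f a))"
    by (auto simp: algebra_simps eq_diff_eq)
  have "\<xi>' r \<in> d" if "r \<in> I" for r
    using motion[OF that] subspace_neg[OF d_sub
        ep_term_minus_ustar_in_subspace[OF f_indep f_inj d_sub direct1 direct2]] by simp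
  with I motion have "\<xi> t - \<xi> 0 \<in> d"
    by (intro has_vector_derivative_in_subspace_imp_diff_in_subspace[OF _ d_sub]) auto
  with \<xi>0 show "\<xi> t \<in> d" by (metis d_sub diff_add_cancel subspace_add)
next
  fix I :: "real set" and \<xi> \<xi>' and u :: "real \<Rightarrow> nat \<Rightarrow> real" and t a
  assume "is_interval I \<and> (\<exists>s\<in>I. \<exists>t\<in>I. s \<noteq> t) \<and>
        (\<forall>t\<in>I. (\<xi> has_vector_derivative \<xi>' t) (at t within I) \<and>
                 \<xi>' t + ep_term br (\<xi> t) = (\<Sum>a<m. u t a *\<^sub>R f a)) \<and>
        (\<forall>t\<in>I. \<xi> t \<in> d)" and t: "t \<in> I" and a: "a < m"
  then obtain s where I: "is_interval I" "s \<in> I" "s \<noteq> t" and curve: "\<forall>r\<in>I. \<xi> r \<in> d"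
    and deriv: "(\<xi> has_vector_derivative \<xi>' t) (at t within I)"
    and motion: "\<xi>' t + ep_term br (\<xi> t) = (\<Sum>a<m. u t a *\<^sub>R f a)"
    by (metis (full_types))
  define \<tau> where "\<tau> = (\<lambda>b. if b < m then u t b else 0)"
  have "- \<xi>' t \<in> d"
    using has_vector_derivative_in_subspace_if_curve_in_subspace[OF I(1,2) t I(3) d_sub deriv curve]
      d_sub by (simp add: subspace_neg)
  moreover have "ep_term br (\<xi> t) = - \<xi>' t + (\<Sum>b<m. \<tau> b *\<^sub>R f b)"
    using motion by (simp add: \<tau>_def algebra_simps eq_diff_eq)
  ultimately have "ustar br f m d (\<xi> t) = \<tau>"
    by (intro ustar_eqI[OF f_indep f_inj d_sub direct1]) (auto simp: \<tau>_def)
  with a show "u t a = ustar br f m d (\<xi> t) a" by (simp add: \<tau>_def)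
qed

end
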